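(* Let $G$ be a connected graph with at least two vertices and let $\sigma=(v_1,\dots,v_n)$ be a layered search ordering of $G$. If the $\mathcal{F}$-tree of $\sigma$ has at most $k$ leaves, then the bandwidth of $\sigma$ is at most $2k-1$.
   Context: All graphs are finite, simple, undirected, connected and non-empty. A search ordering of $G$ is an ordering $(v_1,\dots,v_n)$ of $V(G)$ such that every $v_i$ with $i>1$ has a neighbor among $v_1,\dots,v_{i-1}$. A layered search ordering is a search ordering in which the distance $d_G(v_1,v_i)$ is non-decreasing in $i$ (the distance layers of the start vertex are traversed in increasing order). The $\mathcal{F}$-tree (first-in tree) of a search ordering $\sigma=(v_1,\dots,v_n)$ is the spanning tree rooted at $v_1$ in which the parent of each $v_i$, $i>1$, is the neighbor of $v_i$ that appears leftmost in $\sigma$. A leaf of a rooted tree is a non-root vertex without children (the root is never counted as a leaf, even if it has degree 1). The bandwidth of an ordering $\sigma=(v_1,\dots,v_n)$ is $\max_{v_iv_j\in E(G)}|i-j|$. *)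

theory Defs
  imports Main
begin

definition sgraph :: "'a set \<Rightarrow> ('a \<Rightarrow> 'a \<Rightarrow> bool) \<Rightarrow> bool" where
  "sgraph V E \<longleftrightarrow> finite V \<and> V \<noteq> {} \<and>
     (\<forall>x y. E x y \<longrightarrow> x \<in> V \<and> y \<in> V \<and> x \<noteq> y \<and> E y x)"

definition walk :: "('a \<Rightarrow> 'a \<Rightarrow> bool) \<Rightarrow> 'a list \<Rightarrow> bool" where
  "walk E xs \<longleftrightarrow> xs \<noteq> [] \<and> (\<forall>i. Suc i < length xs \<longrightarrow> E (xs ! i) (xs ! Suc i))"

definition connected_graph :: "'a set \<Rightarrow> ('a \<Rightarrow> 'a \<Rightarrow> bool) \<Rightarrow> bool" where
  "connected_graph V E \<longleftrightarrow>
     (\<forall>u\<in>V. \<forall>v\<in>V. \<exists>xs. walk E xs \<and> hd xs = u \<and> last xs = v)"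

definition gdist :: "('a \<Rightarrow> 'a \<Rightarrow> bool) \<Rightarrow> 'a \<Rightarrow> 'a \<Rightarrow> nat" where
  "gdist E u v = (LEAST n. \<exists>xs. walk E xs \<and> hd xs = u \<and> last xs = v \<and> length xs = Suc n)"

(* search ordering (v_1,...,v_n) as a list, 0-indexed *)
definition search_ordering :: "'a set \<Rightarrow> ('a \<Rightarrow> 'a \<Rightarrow> bool) \<Rightarrow> 'a list \<Rightarrow> bool" where
  "search_ordering V E \<sigma> \<longleftrightarrow> distinct \<sigma> \<and> set \<sigma> = V \<and>
     (\<forall>i. 0 < i \<and> i < length \<sigma> \<longrightarrow> (\<exists>j<i. E (\<sigma> ! i) (\<sigma> ! j)))"

definition layered_search_ordering :: "'a set \<Rightarrow> ('a \<Rightarrow> 'a \<Rightarrow> bool) \<Rightarrow> 'a list \<Rightarrow> bool" where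
  "layered_search_ordering V E \<sigma> \<longleftrightarrow> search_ordering V E \<sigma> \<and>
     (\<forall>i j. i \<le> j \<and> j < length \<sigma> \<longrightarrow> gdist E (\<sigma> ! 0) (\<sigma> ! i) \<le> gdist E (\<sigma> ! 0) (\<sigma> ! j))"

(* F-tree: position of the parent of the vertex at position i > 0 = leftmost neighbour *)
definition ftree_parent :: "('a \<Rightarrow> 'a \<Rightarrow> bool) \<Rightarrow> 'a list \<Rightarrow> nat \<Rightarrow> nat" where
  "ftree_parent E \<sigma> i = (LEAST j. E (\<sigma> ! i) (\<sigma> ! j))"

definition ftree_leaves :: "('a \<Rightarrow> 'a \<Rightarrow> bool) \<Rightarrow> 'a list \<Rightarrow> 'a set" where
  "ftree_leaves E \<sigma> = {\<sigma> ! i | i. 0 < i \<and> i < length \<sigma> \<and>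
      \<not> (\<exists>l. 0 < l \<and> l < length \<sigma> \<and> ftree_parent E \<sigma> l = i)}"

definition bandwidth :: "('a \<Rightarrow> 'a \<Rightarrow> bool) \<Rightarrow> 'a list \<Rightarrow> nat" where
  "bandwidth E \<sigma> = Max ({0} \<union> {nat \<bar>int i - int j\<bar> | i j.
      i < length \<sigma> \<and> j < length \<sigma> \<and> E (\<sigma> ! i) (\<sigma> ! j)})"

end

(* Distances from the first vertex are non-decreasing along a layered ordering, and the
   F-tree parent of every vertex lies in the preceding distance layer, so distance is depth
   in the F-tree.  In a rooted tree no layer has more vertices than the tree has leaves:
   sending a vertex to the last vertex of its subtree gives an injection into the leaves.
   An edge v_a v_b with a < b joins layers at most one apart, so v_a, ..., v_b lie in two
   consecutive layers and b - a + 1 <= 2k. *)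

theory Submission
  imports Defs
begin

lemma walk_snoc:
  assumes "walk E xs" "E (last xs) y"
  shows "walk E (xs @ [y])"
  unfolding walk_def
proof (intro conjI allI impI)
  fix i
  assume i: "Suc i < length (xs @ [y])"
  show "E ((xs @ [y]) ! i) ((xs @ [y]) ! Suc i)"
  proof (cases "Suc i < length xs")
    case True
    then show ?thesis using assms(1) by (simp add: walk_def nth_append)
  next
    case False
    then have "i = length xs - 1" "xs \<noteq> []" using i assms(1) by (auto simp: walk_def)
    then show ?thesis using assms(2) by (simp add: nth_append last_conv_nth)
  qed
qed simp

lemma walk_take:
  assumes "walk E xs" "0 < m"
  shows "walk E (take m xs)"
  using assms by (auto simp: walk_def)

lemma gdist_shortest_walk:
  assumes "connected_graph V E" "u \<in> V" "v \<in> V"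
  obtains xs where "walk E xs" "hd xs = u" "last xs = v" "length xs = Suc (gdist E u v)"
proof -
  obtain xs where "walk E xs" "hd xs = u" "last xs = v"
    using assms unfolding connected_graph_def by blast
  then have "\<exists>n xs. walk E xs \<and> hd xs = u \<and> last xs = v \<and> length xs = Suc n"
    by (intro exI[of _ "length xs - 1"] exI[of _ xs]) (auto simp: walk_def)
  from LeastI_ex[OF this] show ?thesis
    using that unfolding gdist_def by blast
qed

lemma gdist_le_walk:
  assumes "walk E xs" "hd xs = u" "last xs = v" "length xs = Suc m"
  shows "gdist E u v \<le> m"
  unfolding gdist_def by (rule Least_le) (use assms in blast)

lemma gdist_self: "gdist E u u = 0"
  using gdist_le_walk[of E "[u]" u u 0] by (simp add: walk_def)

lemma gdist_edge:
  assumes "connected_graph V E" "u \<in> V" "x \<in> V" "E x y"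
  shows "gdist E u y \<le> Suc (gdist E u x)"
proof -
  obtain xs where xs: "walk E xs" "hd xs = u" "last xs = x" "length xs = Suc (gdist E u x)"
    using gdist_shortest_walk[OF assms(1-3)] .
  have "walk E (xs @ [y])"
    using walk_snoc[OF xs(1)] xs(3) assms(4) by simp
  moreover have "hd (xs @ [y]) = u"
    using xs by (cases xs) auto
  ultimately show ?thesis
    using gdist_le_walk[of E "xs @ [y]" u y] xs(4) by simp
qed

lemma gdist_closer_neighbour:
  assumes "connected_graph V E" "u \<in> V" "x \<in> V" "x \<noteq> u"
  obtains y where "E y x" "gdist E u y < gdist E u x"
proof -
  define g where "g = gdist E u x"
  obtain xs where xs: "walk E xs" "hd xs = u" "last xs = x" "length xs = Suc g"
    using gdist_shortest_walk[OF assms(1-3)] unfolding g_def .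
  have "0 < g"
    using xs assms(4) by (metis hd_conv_nth last_conv_nth length_0_conv nat.distinct(1)
        diff_Suc_1 neq0_conv)
  have "Suc (g - 1) < length xs"
    using xs(4) \<open>0 < g\<close> by simp
  then have "E (xs ! (g - 1)) (xs ! Suc (g - 1))"
    using xs(1) unfolding walk_def by blast
  moreover have "xs ! Suc (g - 1) = x"
    using xs(3,4) \<open>0 < g\<close> by (metis Suc_pred last_conv_nth diff_Suc_1 list.size(3) nat.distinct(1))
  ultimately have "E (xs ! (g - 1)) x"
    by simp
  moreover have "last (take g xs) = xs ! (g - 1)"
    using xs(4) \<open>0 < g\<close> by (subst last_conv_nth) (auto simp: min_def)
  then have "gdist E u (xs ! (g - 1)) \<le> g - 1"
    using xs \<open>0 < g\<close> by (intro gdist_le_walk[OF walk_take[OF xs(1) \<open>0 < g\<close>]]) auto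
  ultimately show ?thesis
    using that \<open>0 < g\<close> unfolding g_def by fastforce
qed

definition tree_leaves :: "nat \<Rightarrow> (nat \<Rightarrow> nat) \<Rightarrow> nat set" where
  "tree_leaves n p = {i. 0 < i \<and> i < n \<and> (\<forall>l. 0 < l \<longrightarrow> l < n \<longrightarrow> p l \<noteq> i)}"

lemma finite_tree_leaves: "finite (tree_leaves n p)"
  unfolding tree_leaves_def by simp

locale index_tree =
  fixes n :: nat and p D :: "nat \<Rightarrow> nat"
  assumes parent_less: "\<And>i. 0 < i \<Longrightarrow> i < n \<Longrightarrow> p i < i"
    and depth_root: "D 0 = 0"
    and depth_parent: "\<And>i. 0 < i \<Longrightarrow> i < n \<Longrightarrow> D i = Suc (D (p i))"
begin

definition ancestor :: "nat \<Rightarrow> nat \<Rightarrow> nat" where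
  "ancestor d x = (p ^^ (D x - d)) x"

definition subtree :: "nat \<Rightarrow> nat \<Rightarrow> nat set" where
  "subtree d i = {x. x < n \<and> d \<le> D x \<and> ancestor d x = i}"

lemma ancestor_parent:
  assumes "0 < l" "l < n" "d \<le> D (p l)"
  shows "ancestor d l = ancestor d (p l)"
proof -
  have "D l - d = Suc (D (p l) - d)"
    using depth_parent[OF assms(1,2)] assms(3) by simp
  then show ?thesis
    unfolding ancestor_def by (simp add: funpow_Suc_right del: funpow.simps)
qed

lemma Max_subtree_in_subtree:
  assumes "i < n" "D i = d"
  shows "Max (subtree d i) \<in> subtree d i"
proof (rule Max_in)
  show "finite (subtree d i)"
    unfolding subtree_def by simp
  show "subtree d i \<noteq> {}"
    using assms unfolding subtree_def ancestor_def by auto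
qed

text \<open>Every child of a vertex of the subtree lies in the subtree and comes later, so the
  last vertex of a subtree has no children.\<close>
lemma Max_subtree_leaf:
  assumes "i < n" "D i = d" "0 < d"
  shows "Max (subtree d i) \<in> tree_leaves n p"
proof -
  define m where "m = Max (subtree d i)"
  have m: "m < n" "d \<le> D m" "ancestor d m = i"
    using Max_subtree_in_subtree[OF assms(1,2)] unfolding m_def subtree_def by auto
  have "0 < m"
    using m(2) assms(3) depth_root by (cases m) auto
  moreover have "p l \<noteq> m" if "0 < l" "l < n" for l
  proof
    assume "p l = m"
    then have "l \<in> subtree d i"
      using that m ancestor_parent[OF that] depth_parent[OF that] unfolding subtree_def by simp
    then have "l \<le> m"
      unfolding m_def by (simp add: subtree_def)
    with parent_less[OF that] \<open>p l = m\<close> show False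
      by simp
  qed
  ultimately show ?thesis
    using m(1) unfolding tree_leaves_def m_def by blast
qed

lemma card_layer_le_card_leaves:
  assumes "2 \<le> n"
  shows "card {i. i < n \<and> D i = d} \<le> card (tree_leaves n p)"
proof (cases "d = 0")
  case True
  have "p l \<noteq> n - 1" if "0 < l" "l < n" for l
    using parent_less[OF that] that by linarith
  then have "n - 1 \<in> tree_leaves n p"
    using assms unfolding tree_leaves_def by auto
  then have "1 \<le> card (tree_leaves n p)"
    using finite_tree_leaves by (auto simp: Suc_le_eq card_gt_0_iff)
  moreover have "i = 0" if "i < n" "D i = d" for i
    using depth_parent[of i] that True by (cases "i = 0") auto
  then have "{i. i < n \<and> D i = d} \<subseteq> {0}"
    by blast
  then have "card {i. i < n \<and> D i = d} \<le> card {0::nat}"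
    by (intro card_mono) simp_all
  ultimately show ?thesis
    by simp
next
  case False
  let ?last = "\<lambda>i. Max (subtree d i)"
  have "inj_on ?last {i. i < n \<and> D i = d}"
  proof (rule inj_on_inverseI)
    fix i
    assume "i \<in> {i. i < n \<and> D i = d}"
    then show "ancestor d (?last i) = i"
      using Max_subtree_in_subtree unfolding subtree_def by blast
  qed
  moreover have "?last ` {i. i < n \<and> D i = d} \<subseteq> tree_leaves n p"
    using Max_subtree_leaf False by auto
  moreover note finite_tree_leaves
  ultimately show ?thesis
    by (rule card_inj_on_le)
qed

end

lemma ftree_parent_less:
  assumes "search_ordering V E \<sigma>" "0 < i" "i < length \<sigma>"
  shows "ftree_parent E \<sigma> i < i" and "E (\<sigma> ! i) (\<sigma> ! ftree_parent E \<sigma> i)"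
proof -
  obtain j where "j < i" "E (\<sigma> ! i) (\<sigma> ! j)"
    using assms unfolding search_ordering_def by blast
  then show "ftree_parent E \<sigma> i < i" "E (\<sigma> ! i) (\<sigma> ! ftree_parent E \<sigma> i)"
    unfolding ftree_parent_def by (auto intro: Least_le[THEN le_less_trans] LeastI)
qed

text \<open>In a layered ordering the F-tree parent of a vertex lies in the previous distance
  layer: some neighbour is closer to the root, hence earlier, and the parent is earlier still.\<close>
lemma layered_search_ordering_index_tree:
  assumes "sgraph V E" "connected_graph V E" "layered_search_ordering V E \<sigma>" "\<sigma> \<noteq> []"
  shows "index_tree (length \<sigma>) (ftree_parent E \<sigma>) (\<lambda>i. gdist E (\<sigma> ! 0) (\<sigma> ! i))"
proof
  define n r p D where "n = length \<sigma>" and "r = \<sigma> ! 0" and "p = ftree_parent E \<sigma>"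
    and "D i = gdist E r (\<sigma> ! i)" for i
  have so: "search_ordering V E \<sigma>"
    using assms(3) unfolding layered_search_ordering_def by blast
  have in_V: "\<sigma> ! i \<in> V" if "i < n" for i
    using so that unfolding search_ordering_def n_def by auto
  have "r \<in> V"
    using in_V assms(4) unfolding r_def n_def by simp
  have mono: "D i \<le> D j" if "i \<le> j" "j < n" for i j
    using assms(3) that unfolding layered_search_ordering_def D_def r_def n_def by blast
  show "gdist E (\<sigma> ! 0) (\<sigma> ! 0) = 0"
    by (rule gdist_self)
  fix i
  assume i: "0 < i" "i < length \<sigma>"
  then show "ftree_parent E \<sigma> i < i"
    using ftree_parent_less[OF so] by blast
  have "\<sigma> ! i \<noteq> r"
    using so i nth_eq_iff_index_eq[of \<sigma> i 0] unfolding search_ordering_def r_def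
    by (metis gr_implies_not0 less_trans)
  then obtain y where y: "E y (\<sigma> ! i)" "gdist E r y < D i"
    using gdist_closer_neighbour[OF assms(2) \<open>r \<in> V\<close> in_V] i unfolding D_def n_def by blast
  have "y \<in> set \<sigma>"
    using y(1) assms(1) so unfolding sgraph_def search_ordering_def by blast
  then obtain j where j: "j < n" "\<sigma> ! j = y"
    unfolding n_def by (metis in_set_conv_nth)
  have "D j < D i"
    using y(2) j(2) unfolding D_def by simp
  then have "j < i"
    using mono[of i j] j(1) by fastforce
  have "p i \<le> j"
    using y(1) j(2) assms(1) unfolding p_def ftree_parent_def sgraph_def by (blast intro: Least_le)
  have parent: "p i < i" "E (\<sigma> ! i) (\<sigma> ! p i)"
    using ftree_parent_less[OF so] i unfolding p_def by blast+
  have "D i \<le> Suc (D (p i))"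
    using gdist_edge[OF assms(2) \<open>r \<in> V\<close> in_V] parent i assms(1)
    unfolding D_def n_def sgraph_def by (meson less_trans)
  moreover have "D (p i) \<le> D j"
    using mono \<open>p i \<le> j\<close> j(1) by blast
  ultimately show "gdist E (\<sigma> ! 0) (\<sigma> ! i) = Suc (gdist E (\<sigma> ! 0) (\<sigma> ! ftree_parent E \<sigma> i))"
    using \<open>D j < D i\<close> unfolding D_def r_def p_def by linarith
qed

lemma layered_edge_span:
  assumes "connected_graph V E" "layered_search_ordering V E \<sigma>"
    and "a < b" "b < length \<sigma>" "E (\<sigma> ! a) (\<sigma> ! b)"
  defines "D \<equiv> \<lambda>i. gdist E (\<sigma> ! 0) (\<sigma> ! i)"
  shows "Suc (b - a) \<le> card {i. i < length \<sigma> \<and> D i = D a}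
                       + card {i. i < length \<sigma> \<and> D i = Suc (D a)}"
proof -
  let ?layer = "\<lambda>d. {i. i < length \<sigma> \<and> D i = d}"
  have so: "search_ordering V E \<sigma>"
    using assms(2) unfolding layered_search_ordering_def by blast
  have in_V: "\<sigma> ! i \<in> V" if "i < length \<sigma>" for i
    using so that unfolding search_ordering_def by auto
  have mono: "D i \<le> D j" if "i \<le> j" "j < length \<sigma>" for i j
    using assms(2) that unfolding layered_search_ordering_def D_def by blast
  have "0 < length \<sigma>" "a < length \<sigma>"
    using assms(3,4) by linarith+
  then have "D b \<le> Suc (D a)"
    using gdist_edge[OF assms(1) in_V in_V assms(5)] unfolding D_def by blast
  have "{a..b} \<subseteq> ?layer (D a) \<union> ?layer (Suc (D a))"
  proof
    fix m
    assume "m \<in> {a..b}"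
    then have "D a \<le> D m" "D m \<le> D b" "m < length \<sigma>"
      using mono assms(4) by auto
    then show "m \<in> ?layer (D a) \<union> ?layer (Suc (D a))"
      using \<open>D b \<le> Suc (D a)\<close> by auto
  qed
  then have "card {a..b} \<le> card (?layer (D a) \<union> ?layer (Suc (D a)))"
    by (intro card_mono) auto
  also have "\<dots> \<le> card (?layer (D a)) + card (?layer (Suc (D a)))"
    by (rule card_Un_le)
  finally show ?thesis
    using assms(3) by simp
qed

lemma bandwidth_le:
  assumes "\<And>x y. E x y \<Longrightarrow> E y x"
    and "\<And>i j. i < j \<Longrightarrow> j < length \<sigma> \<Longrightarrow> E (\<sigma> ! i) (\<sigma> ! j) \<Longrightarrow> j - i \<le> m"
  shows "bandwidth E \<sigma> \<le> m"
proof -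
  let ?S = "{nat \<bar>int i - int j\<bar> | i j. i < length \<sigma> \<and> j < length \<sigma> \<and> E (\<sigma> ! i) (\<sigma> ! j)}"
  have "?S \<subseteq> (\<lambda>(i, j). nat \<bar>int i - int j\<bar>) ` ({..<length \<sigma>} \<times> {..<length \<sigma>})"
    by auto
  then have "finite ?S"
    by (rule finite_subset) simp
  moreover have "nat \<bar>int i - int j\<bar> \<le> m"
    if "i < length \<sigma>" "j < length \<sigma>" "E (\<sigma> ! i) (\<sigma> ! j)" for i j
    using assms(2)[of i j] assms(2)[of j i] assms(1) that by (cases i j rule: linorder_cases) auto
  ultimately show ?thesis
    unfolding bandwidth_def by (subst Max_le_iff) auto
qed

lemma card_ftree_leaves:
  assumes "distinct \<sigma>"
  shows "card (ftree_leaves E \<sigma>) = card (tree_leaves (length \<sigma>) (ftree_parent E \<sigma>))"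
proof -
  have "ftree_leaves E \<sigma> = (!) \<sigma> ` tree_leaves (length \<sigma>) (ftree_parent E \<sigma>)"
    unfolding ftree_leaves_def tree_leaves_def setcompr_eq_image by auto
  moreover have "inj_on ((!) \<sigma>) (tree_leaves (length \<sigma>) (ftree_parent E \<sigma>))"
    using assms unfolding tree_leaves_def by (auto simp: inj_on_def nth_eq_iff_index_eq)
  ultimately show ?thesis
    by (simp add: card_image)
qed

theorem corollary3p2:
  fixes V :: "'a set" and E :: "'a \<Rightarrow> 'a \<Rightarrow> bool" and \<sigma> :: "'a list" and k :: nat
  assumes "sgraph V E" and "connected_graph V E" and "card V \<ge> 2"
    and "layered_search_ordering V E \<sigma>"
    and "card (ftree_leaves E \<sigma>) \<le> k"
  shows "bandwidth E \<sigma> \<le> 2 * k - 1"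
proof -
  define D where "D i = gdist E (\<sigma> ! 0) (\<sigma> ! i)" for i
  have "distinct \<sigma>" "set \<sigma> = V"
    using assms(4) unfolding layered_search_ordering_def search_ordering_def by auto
  then have "2 \<le> length \<sigma>"
    using assms(3) distinct_card by fastforce
  then have "\<sigma> \<noteq> []"
    by (cases \<sigma>) auto
  then interpret index_tree "length \<sigma>" "ftree_parent E \<sigma>" D
    unfolding D_def by (rule layered_search_ordering_index_tree[OF assms(1,2,4)])
  have "card (tree_leaves (length \<sigma>) (ftree_parent E \<sigma>)) \<le> k"
    using assms(5) card_ftree_leaves[OF \<open>distinct \<sigma>\<close>] by simp
  then have layer: "card {i. i < length \<sigma> \<and> D i = d} \<le> k" for d
    using card_layer_le_card_leaves[OF \<open>2 \<le> length \<sigma>\<close>] le_trans by blast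
  show ?thesis
  proof (rule bandwidth_le)
    show "E y x" if "E x y" for x y
      using assms(1) that unfolding sgraph_def by blast
    fix i j
    assume "i < j" "j < length \<sigma>" "E (\<sigma> ! i) (\<sigma> ! j)"
    then have "Suc (j - i) \<le> 2 * k"
      using layered_edge_span[OF assms(2,4)] layer[of "D i"] layer[of "Suc (D i)"]
      unfolding D_def by fastforce
    then show "j - i \<le> 2 * k - 1"
      by simp
  qed
qed

end
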